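(* In the setting of the context, for every $K=K_{\mathbf x}\times I_n\in\mathcal T_h$ and every $v\in H^1(K)$, $$a_h^K(v,v)\le3\max(1,\tilde c^* )\,\nu\,\big(1+(1+c_{tr})c_{\Pi^N}\big)\Big(h_{K_{\mathbf x}}^{-2}\|v\|^2_{0,K}+\|\nabla_{\mathbf x}v\|^2_{0,K}+h_{K_{\mathbf x}}^{-2}h_{I_n}^2\|\partial_tv\|^2_{0,K}\Big),$$ and consequently, for every $v\in H^1(\mathcal T_h)$, $$a_h(v,v)\le3\max(1,\tilde c^* )\,\nu\,\big(1+(1+c_{tr})c_{\Pi^N}\big)\sum_{K\in\mathcal T_h}\Big(h_{K_{\mathbf x}}^{-2}\|v\|^2_{0,K}+\|\nabla_{\mathbf x}v\|^2_{0,K}+h_{K_{\mathbf x}}^{-2}h_{I_n}^2\|\partial_tv\|^2_{0,K}\Big).$$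
   Context: Let $d\in\{1,2,3\}$, $\nu>0$, $p\ge1$; $\mathbb P_p(D)$: polynomials of total degree $\le p$. $\mathcal T_h$ is a space-time mesh of elements $K=K_{\mathbf x}\times I_n$, with $K_{\mathbf x}$ polytopes of a spatial mesh and $I_n=(t_{n-1},t_n)$, $h_{I_n}=t_n-t_{n-1}$, $h_{K_{\mathbf x}}=\mathrm{diam}(K_{\mathbf x})$; $H^1(\mathcal T_h)$ denotes functions whose restriction to each $K$ is in $H^1(K)$. On $K$, $\Pi^N_pv\in\mathbb P_p(K)$ is defined by $\int_K\nabla_{\mathbf x}q\cdot\nabla_{\mathbf x}(\Pi^N_pv-v)=0$ $\forall q\in\mathbb P_p(K)$, $\int_Kq(t)(\Pi^N_pv-v)=0$ $\forall q\in\mathbb P_{p-1}(I_n)$, $\int_{K_{\mathbf x}}(\Pi^N_pv-v)(\cdot,t_{n-1})=0$. Let $a^K(u,v)=\nu(\nabla_{\mathbf x}u,\nabla_{\mathbf x}v)_{0,K}$ and $a_h^K(u,v)=a^K(\Pi^N_pu,\Pi^N_pv)+\nu S^K((I-\Pi^N_p)u,(I-\Pi^N_p)v)$, $a_h=\sum_Ka_h^K$, where $S^K$ is a symmetric positive semidefinite bilinear form satisfying $S^K(w,w)\le\tilde c^*(h_{K_{\mathbf x}}^{-2}\|w\|^2_{0,K}+\|\nabla_{\mathbf x}w\|^2_{0,K}+h_{K_{\mathbf x}}^{-2}h_{I_n}^2\|\partial_tw\|^2_{0,K})$ for all $w\in H^1(K)$. The constant $c_{tr}>0$ is such that $h_{I_n}\|w(\cdot,t_{n-1})\|^2_{0,K_{\mathbf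 x}}\le c_{tr}(\|w\|^2_{0,K}+h_{I_n}^2\|\partial_tw\|^2_{0,K})$ for all $w\in H^1(K)$. The constant $c_{\Pi^N}>0$ is such that for all $q\in\mathbb P_p(K)$: $\|q\|^2_{0,K}+h_{K_{\mathbf x}}^2\|\nabla_{\mathbf x}q\|^2_{0,K}+h_{I_n}^2\|\partial_tq\|^2_{0,K}\le c_{\Pi^N}\big(h_{K_{\mathbf x}}^2\|\nabla_{\mathbf x}q\|^2_{0,K}+\|P q\|^2_{0,K}+h_{I_n}\|\overline{q(\cdot,t_{n-1})}\|^2_{0,K_{\mathbf x}}\big)$, where $P$ is the $L^2(K)$-orthogonal projection onto $\mathbb P_{p-1}(I_n)$ (polynomials of degree $\le p-1$ in $t$ only, viewed as functions on $K$) and $\overline{g}$ is the mean value of $g$ over $K_{\mathbf x}$. *)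

theory Defs
  imports "HOL-Analysis.Analysis"
begin

type_synonym 'd pt = "(real^'d) \<times> real"   (* space-time point (x,t) *)

fun cdiff :: "nat \<Rightarrow> ('a::euclidean_space \<Rightarrow> real) \<Rightarrow> bool" where
  "cdiff 0 f = continuous_on UNIV f"
| "cdiff (Suc k) f = (f differentiable_on UNIV \<and>
       (\<forall>b\<in>Basis. cdiff k (\<lambda>z. frechet_derivative f (at z) b)))"

definition smooth :: "('a::euclidean_space \<Rightarrow> real) \<Rightarrow> bool" where
  "smooth f \<longleftrightarrow> (\<forall>k. cdiff k f)"

definition tsupport :: "('a::euclidean_space \<Rightarrow> real) \<Rightarrow> 'a set" where
  "tsupport f = closure {z. f z \<noteq> 0}"

definition test_fun :: "'a::euclidean_space set \<Rightarrow> ('a \<Rightarrow> real) \<Rightarrow> bool" where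
  "test_fun U \<phi> \<longleftrightarrow> smooth \<phi> \<and> compact (tsupport \<phi>) \<and> tsupport \<phi> \<subseteq> U"

definition L2 :: "'a::euclidean_space set \<Rightarrow> ('a \<Rightarrow> real) \<Rightarrow> bool" where
  "L2 U f \<longleftrightarrow> set_borel_measurable lborel U f \<and> set_integrable lborel U (\<lambda>z. (f z)^2)"

definition nsq :: "'a::euclidean_space set \<Rightarrow> ('a \<Rightarrow> real) \<Rightarrow> real" where
  "nsq U f = (LINT z:U|lborel. (f z)^2)"

definition weak_deriv :: "'a::euclidean_space set \<Rightarrow> ('a \<Rightarrow> real) \<Rightarrow> 'a \<Rightarrow> ('a \<Rightarrow> real) \<Rightarrow> bool" where
  "weak_deriv U v b g \<longleftrightarrow> (\<forall>\<phi>. test_fun U \<phi> \<longrightarrow>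
      (LINT z:U|lborel. v z * frechet_derivative \<phi> (at z) b) = - (LINT z:U|lborel. g z * \<phi> z))"

definition ex :: "'d::finite \<Rightarrow> 'd pt" where "ex i = (axis i 1, 0)"
definition et :: "'d::finite pt" where "et = (0, 1)"

definition H1w :: "'d::finite pt set \<Rightarrow> ('d pt \<Rightarrow> real) \<Rightarrow> ('d \<Rightarrow> 'd pt \<Rightarrow> real)
                   \<Rightarrow> ('d pt \<Rightarrow> real) \<Rightarrow> bool" where
  "H1w K v gx gt \<longleftrightarrow> L2 K v \<and> (\<forall>i. L2 K (gx i) \<and> weak_deriv K v (ex i) (gx i))
                       \<and> L2 K gt \<and> weak_deriv K v et gt"

text \<open>tr is the trace of v on the bottom face Kx x {t0} of K = Kx x (t0,t1)
  (weak characterisation via integration by parts in t)\<close>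
definition bottom_trace :: "(real^'d::finite) set \<Rightarrow> real \<Rightarrow> real \<Rightarrow> ('d pt \<Rightarrow> real)
                   \<Rightarrow> ('d pt \<Rightarrow> real) \<Rightarrow> (real^'d \<Rightarrow> real) \<Rightarrow> bool" where
  "bottom_trace Kx t0 t1 v gt tr \<longleftrightarrow> L2 Kx tr \<and>
     (\<forall>\<phi>. smooth \<phi> \<and> compact (tsupport \<phi>) \<and> tsupport \<phi> \<subseteq> Kx \<times> {..<t1} \<longrightarrow>
        (LINT z:(Kx \<times> {t0<..<t1})|lborel. v z * frechet_derivative \<phi> (at z) et)
      + (LINT z:(Kx \<times> {t0<..<t1})|lborel. gt z * \<phi> z)
      = - (LINT x:Kx|lborel. tr x * \<phi> (x, t0)))"

definition dx :: "'d::finite \<Rightarrow> ('d pt \<Rightarrow> real) \<Rightarrow> 'd pt \<Rightarrow> real" where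
  "dx i f z = frechet_derivative f (at z) (ex i)"
definition dt :: "('d::finite pt \<Rightarrow> real) \<Rightarrow> 'd pt \<Rightarrow> real" where
  "dt f z = frechet_derivative f (at z) et"

definition gradsq :: "'d::finite pt set \<Rightarrow> ('d pt \<Rightarrow> real) \<Rightarrow> real" where
  "gradsq K f = (\<Sum>i\<in>UNIV. nsq K (dx i f))"

definition ppoly :: "nat \<Rightarrow> ('d::finite pt \<Rightarrow> real) \<Rightarrow> bool" where
  "ppoly p q \<longleftrightarrow> (\<exists>c :: ('d \<Rightarrow> nat) \<times> nat \<Rightarrow> real.
     q = (\<lambda>(x,t). \<Sum>\<alpha>\<in>{\<alpha>. sum (fst \<alpha>) UNIV + snd \<alpha> \<le> p}.
              c \<alpha> * (\<Prod>i\<in>UNIV. (x$i) ^ (fst \<alpha> i)) * t ^ (snd \<alpha>)))"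

definition tpoly :: "nat \<Rightarrow> ('d::finite pt \<Rightarrow> real) \<Rightarrow> bool" where
  "tpoly m s \<longleftrightarrow> (\<exists>c :: nat \<Rightarrow> real. s = (\<lambda>(x,t). \<Sum>k\<le>m. c k * t ^ k))"

definition is_tproj :: "'d::finite pt set \<Rightarrow> nat \<Rightarrow> ('d pt \<Rightarrow> real) \<Rightarrow> ('d pt \<Rightarrow> real) \<Rightarrow> bool" where
  "is_tproj K p f r \<longleftrightarrow> tpoly (p - 1) r \<and>
     (\<forall>s. tpoly (p - 1) s \<longrightarrow> (LINT z:K|lborel. (f z - r z) * s z) = 0)"

definition mean :: "(real^'d::finite) set \<Rightarrow> (real^'d \<Rightarrow> real) \<Rightarrow> real" where
  "mean Kx g = (LINT x:Kx|lborel. g x) / measure lborel Kx"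

definition is_PiN :: "nat \<Rightarrow> (real^'d::finite) set \<Rightarrow> real \<Rightarrow> real \<Rightarrow> ('d pt \<Rightarrow> real)
        \<Rightarrow> ('d \<Rightarrow> 'd pt \<Rightarrow> real) \<Rightarrow> (real^'d \<Rightarrow> real) \<Rightarrow> ('d pt \<Rightarrow> real) \<Rightarrow> bool" where
  "is_PiN p Kx t0 t1 v gx tr q \<longleftrightarrow> ppoly p q
     \<and> (\<forall>s. ppoly p s \<longrightarrow>
          (\<Sum>i\<in>UNIV. LINT z:(Kx \<times> {t0<..<t1})|lborel. dx i s z * (dx i q z - gx i z)) = 0)
     \<and> (\<forall>s. tpoly (p - 1) s \<longrightarrow> (LINT z:(Kx \<times> {t0<..<t1})|lborel. s z * (q z - v z)) = 0)
     \<and> (LINT x:Kx|lborel. q (x, t0) - tr x) = 0"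

definition polytopal :: "(real^'d::finite) set \<Rightarrow> bool" where
  "polytopal Kx \<longleftrightarrow> (\<exists>P. finite P \<and> (\<forall>Q\<in>P. polytope Q) \<and> Kx = interior (\<Union>P))
                     \<and> connected Kx \<and> Kx \<noteq> {}"

definition rhsK :: "(real^'d::finite) set \<Rightarrow> real \<Rightarrow> real \<Rightarrow> ('d pt \<Rightarrow> real)
        \<Rightarrow> ('d \<Rightarrow> 'd pt \<Rightarrow> real) \<Rightarrow> ('d pt \<Rightarrow> real) \<Rightarrow> real" where
  "rhsK Kx t0 t1 w gwx gwt =
     nsq (Kx \<times> {t0<..<t1}) w / (diameter Kx)^2 + (\<Sum>i\<in>UNIV. nsq (Kx \<times> {t0<..<t1}) (gwx i))
     + (t1 - t0)^2 / (diameter Kx)^2 * nsq (Kx \<times> {t0<..<t1}) gwt"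

end

(* Put w = v - Pi v. The gradient condition defining Pi v makes Pi v the orthogonal projection of v
   for the spatial H^1 seminorm, so |grad Pi v|^2 + |grad w|^2 = |grad v|^2; this bounds the
   consistency term. The assumed bound on S reduces the stabilisation term to the h^-2-weighted
   L^2 norms of w and dt w, hence of Pi v and dt Pi v. Since Pi v is a polynomial, the inverse
   estimate c_Pi controls these by |grad Pi v|, by the time projection P Pi v = P v, whose norm is at
   most |v|, and by the mean of Pi v on the bottom face, which equals the mean of the trace of v
   and is bounded by the trace inequality. Being a polynomial also makes the weak derivatives of
   Pi v classical, which is needed to apply the bound on S to w. *)
theory Submission
  imports Defs
begin

section \<open>Square-integrable functions\<close>

definition square_integrable :: "'a measure \<Rightarrow> ('a \<Rightarrow> real) \<Rightarrow> bool" where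
  "square_integrable M f \<longleftrightarrow> f \<in> borel_measurable M \<and> integrable M (\<lambda>z. (f z)^2)"

lemma square_integrable_imp_integrable_mult:
  assumes f: "square_integrable M f" and g: "square_integrable M g"
  shows "integrable M (\<lambda>z. f z * g z)"
proof (rule Bochner_Integration.integrable_bound)
  show "integrable M (\<lambda>z. (f z)^2 + (g z)^2)"
    using f g unfolding square_integrable_def by simp
  show "(\<lambda>z. f z * g z) \<in> borel_measurable M"
    using f g unfolding square_integrable_def by auto
  have "\<bar>f z * g z\<bar> \<le> (f z)^2 + (g z)^2" for z
  proof -
    have "2 * \<bar>f z * g z\<bar> \<le> (f z)^2 + (g z)^2"
      using sum_squares_bound[of "\<bar>f z\<bar>" "\<bar>g z\<bar>"] by (simp add: abs_mult)
    then show ?thesis using abs_ge_zero[of "f z * g z"] by linarith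
  qed
  then show "AE z in M. norm (f z * g z) \<le> norm ((f z)^2 + (g z)^2)"
    by simp
qed

lemma square_integrable_add:
  assumes "square_integrable M f" "square_integrable M g"
  shows "square_integrable M (\<lambda>z. f z + g z)"
proof -
  have "integrable M (\<lambda>z. (f z)^2 + 2 * (f z * g z) + (g z)^2)"
    using assms square_integrable_imp_integrable_mult[OF assms]
    unfolding square_integrable_def by auto
  then show ?thesis
    using assms unfolding square_integrable_def by (auto simp: power2_sum ac_simps)
qed

lemma square_integrable_cmult:
  "square_integrable M f \<Longrightarrow> square_integrable M (\<lambda>z. c * f z)"
  unfolding square_integrable_def by (auto simp: power_mult_distrib)

lemma square_integrable_diff:
  assumes "square_integrable M f" "square_integrable M g"
  shows "square_integrable M (\<lambda>z. f z - g z)"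
  using square_integrable_add[OF assms(1) square_integrable_cmult[OF assms(2), of "-1"]] by simp

lemma square_integrable_bounded:
  assumes "finite_measure M" "f \<in> borel_measurable M" "\<And>z. z \<in> space M \<Longrightarrow> \<bar>f z\<bar> \<le> B"
  shows "square_integrable M f"
proof -
  have "(f z)^2 \<le> B^2" if "z \<in> space M" for z
    by (metis abs_ge_zero assms(3) power2_abs power_mono that)
  then have "integrable M (\<lambda>z. (f z)^2)"
    using assms(2) by (intro finite_measure.integrable_const_bound[OF assms(1), where B = "B^2"])
      (auto intro!: AE_I2)
  then show ?thesis using assms(2) unfolding square_integrable_def by blast
qed

lemma integral_square_nonneg: "0 \<le> integral\<^sup>L M (\<lambda>z. (f z)^2 :: real)"
  by (rule integral_nonneg_AE) simp

lemma integral_square_diff_eq: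
  assumes g: "square_integrable M g" and d: "square_integrable M d"
  shows "integral\<^sup>L M (\<lambda>z. (g z - d z)^2)
       = integral\<^sup>L M (\<lambda>z. (g z)^2) - integral\<^sup>L M (\<lambda>z. (d z)^2)
         + 2 * integral\<^sup>L M (\<lambda>z. d z * (d z - g z))"
proof -
  have "integrable M (\<lambda>z. (g z)^2)" "integrable M (\<lambda>z. (d z)^2)"
    "integrable M (\<lambda>z. d z * (d z - g z))"
    using g d square_integrable_imp_integrable_mult[OF d square_integrable_diff[OF d g]]
    unfolding square_integrable_def by auto
  moreover have "(\<lambda>z. (g z - d z)^2) = (\<lambda>z. (g z)^2 - (d z)^2 + 2 * (d z * (d z - g z)))"
    by (simp add: power2_eq_square algebra_simps)
  ultimately show ?thesis by simp
qed

lemma integral_square_le_of_orthogonal: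
  assumes "square_integrable M r" "square_integrable M v"
    and "integral\<^sup>L M (\<lambda>z. r z * (r z - v z)) = 0"
  shows "integral\<^sup>L M (\<lambda>z. (r z)^2) \<le> integral\<^sup>L M (\<lambda>z. (v z)^2)"
  using integral_square_diff_eq[OF assms(2,1)] integral_square_nonneg[of M "\<lambda>z. v z - r z"]
    assms(3) by linarith

lemma integral_square_diff_le:
  assumes a: "square_integrable M a" and b: "square_integrable M b"
  shows "integral\<^sup>L M (\<lambda>z. (a z - b z)^2)
       \<le> 2 * integral\<^sup>L M (\<lambda>z. (a z)^2) + 2 * integral\<^sup>L M (\<lambda>z. (b z)^2)"
proof -
  have "integrable M (\<lambda>z. (a z - b z)^2)" "integrable M (\<lambda>z. (a z + b z)^2)"
    "integrable M (\<lambda>z. (a z)^2)" "integrable M (\<lambda>z. (b z)^2)"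
    using a b square_integrable_diff[OF a b] square_integrable_add[OF a b]
    unfolding square_integrable_def by auto
  then have "integral\<^sup>L M (\<lambda>z. (a z - b z)^2) + integral\<^sup>L M (\<lambda>z. (a z + b z)^2)
      = integral\<^sup>L M (\<lambda>z. (a z - b z)^2 + (a z + b z)^2)"
    by simp
  also have "\<dots> = integral\<^sup>L M (\<lambda>z. 2 * (a z)^2 + 2 * (b z)^2)"
    by (simp add: power2_eq_square algebra_simps)
  also have "\<dots> = 2 * integral\<^sup>L M (\<lambda>z. (a z)^2) + 2 * integral\<^sup>L M (\<lambda>z. (b z)^2)"
    using \<open>integrable M (\<lambda>z. (a z)^2)\<close> \<open>integrable M (\<lambda>z. (b z)^2)\<close> by simp
  finally have "integral\<^sup>L M (\<lambda>z. (a z - b z)^2) + integral\<^sup>L M (\<lambda>z. (a z + b z)^2)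
      = 2 * integral\<^sup>L M (\<lambda>z. (a z)^2) + 2 * integral\<^sup>L M (\<lambda>z. (b z)^2)" .
  then show ?thesis using integral_square_nonneg[of M "\<lambda>z. a z + b z"] by linarith
qed

lemma square_integral_le_measure_mult:
  assumes M: "finite_measure M" and f: "square_integrable M f"
  shows "(integral\<^sup>L M f)^2 \<le> measure M (space M) * integral\<^sup>L M (\<lambda>z. (f z)^2)"
proof (cases "measure M (space M) = 0")
  case True
  then have "emeasure M (space M) = 0"
    using finite_measure.emeasure_eq_measure[OF M] by simp
  then have "integral\<^sup>L M f = 0"
    by (intro integral_eq_zero_AE emeasure_0_AE)
  then show ?thesis by simp
next
  case False
  define \<mu> where "\<mu> = measure M (space M)"
  define m where "m = integral\<^sup>L M f / \<mu>"
  have "integrable M f" "integrable M (\<lambda>z. (f z)^2)"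
    using f finite_measure.square_integrable_imp_integrable[OF M] unfolding square_integrable_def
    by auto
  moreover have "integrable M (\<lambda>z. m^2)"
    using M by (simp add: finite_measure.integrable_const)
  moreover have "(\<lambda>z. (f z - m)^2) = (\<lambda>z. (f z)^2 - 2 * m * f z + m^2)"
    by (simp add: power2_eq_square algebra_simps)
  ultimately have "integral\<^sup>L M (\<lambda>z. (f z - m)^2)
      = integral\<^sup>L M (\<lambda>z. (f z)^2) - 2 * m * integral\<^sup>L M f + m^2 * \<mu>"
    unfolding \<mu>_def by simp
  also have "integral\<^sup>L M f = m * \<mu>"
    using False unfolding m_def \<mu>_def by simp
  finally have "m^2 * \<mu> \<le> integral\<^sup>L M (\<lambda>z. (f z)^2)"
    using integral_square_nonneg[of M "\<lambda>z. f z - m"] by (simp add: power2_eq_square mult.commute)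
  moreover have "(integral\<^sup>L M f)^2 = \<mu> * (m^2 * \<mu>)"
    using \<open>integral\<^sup>L M f = m * \<mu>\<close> by (simp add: power2_eq_square)
  moreover have "\<mu> \<ge> 0" unfolding \<mu>_def by simp
  ultimately show ?thesis unfolding \<mu>_def by (simp add: mult_left_mono)
qed

section \<open>Orthogonal projection onto polynomials in time\<close>

definition orth_proj ::
    "'a measure \<Rightarrow> (('a \<Rightarrow> real) \<Rightarrow> bool) \<Rightarrow> ('a \<Rightarrow> real) \<Rightarrow> ('a \<Rightarrow> real) \<Rightarrow> bool"
  where "orth_proj M W g r \<longleftrightarrow> W r \<and> (\<forall>s. W s \<longrightarrow> integral\<^sup>L M (\<lambda>z. (g z - r z) * s z) = 0)"

lemma integral_mult_eq_0_of_integral_square_eq_0: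
  assumes u: "square_integrable M u" and a: "square_integrable M a"
    and "integral\<^sup>L M (\<lambda>z. (u z)^2) = 0"
  shows "integral\<^sup>L M (\<lambda>z. a z * u z) = 0"
proof -
  have "AE z in M. (u z)^2 = 0"
    using assms integral_nonneg_eq_0_iff_AE[of M "\<lambda>z. (u z)^2"]
    unfolding square_integrable_def by auto
  then have "AE z in M. a z * u z = 0" by eventually_elim simp
  then show ?thesis by (rule integral_eq_zero_AE)
qed

text \<open>A Gram--Schmidt step: the projection onto W' = W + span {e} is the projection onto W
  corrected along the component u = e - P e of e orthogonal to W.\<close>
lemma orth_proj_extend:
  assumes W_L2: "\<And>s. W s \<Longrightarrow> square_integrable M s"
    and W_add: "\<And>a b. W a \<Longrightarrow> W b \<Longrightarrow> W (\<lambda>z. a z + b z)"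
    and W_scale: "\<And>a c. W a \<Longrightarrow> W (\<lambda>z. c * a z)"
    and W_proj: "\<And>g. square_integrable M g \<Longrightarrow> \<exists>r. orth_proj M W g r"
    and e: "square_integrable M e"
    and W': "\<And>s. W' s \<longleftrightarrow> (\<exists>s' c. W s' \<and> s = (\<lambda>z. s' z + c * e z))"
    and g: "square_integrable M g"
  shows "\<exists>r. orth_proj M W' g r"
proof -
  obtain re where re: "orth_proj M W e re" using W_proj[OF e] by blast
  obtain r0 where r0: "orth_proj M W g r0" using W_proj[OF g] by blast
  define u where "u z = e z - re z" for z
  define a where "a = integral\<^sup>L M (\<lambda>z. (g z - r0 z) * u z)"
  define n where "n = integral\<^sup>L M (\<lambda>z. (u z)^2)"
  define r where "r z = r0 z + a / n * u z" for z
  have u: "square_integrable M u"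
    unfolding u_def using e W_L2 re square_integrable_diff orth_proj_def by blast
  have g_r0: "square_integrable M (\<lambda>z. g z - r0 z)"
    using g W_L2 r0 square_integrable_diff orth_proj_def by blast
  \<comment> \<open>If n = 0 then u = 0 a.e., so a = 0 and the junk value a / 0 = 0 is harmless.\<close>
  have a_n: "a = 0" if "n = 0"
    using integral_mult_eq_0_of_integral_square_eq_0[OF u g_r0] that unfolding a_def n_def .
  have "W' r"
  proof -
    have "W (\<lambda>z. r0 z + (- (a / n)) * re z)"
      using r0 re W_add W_scale unfolding orth_proj_def by blast
    moreover have "r = (\<lambda>z. (r0 z + (- (a / n)) * re z) + a / n * e z)"
      unfolding r_def u_def by (auto simp: algebra_simps)
    ultimately show ?thesis using W' by blast
  qed
  moreover have "integral\<^sup>L M (\<lambda>z. (g z - r z) * s z) = 0" if "W' s" for s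
  proof -
    obtain s' c where s': "W s'" "s = (\<lambda>z. s' z + c * e z)" using \<open>W' s\<close> W' by blast
    define s'' where "s'' z = s' z + c * re z" for z
    have s'': "W s''" unfolding s''_def using s'(1) re W_add W_scale orth_proj_def by blast
    have s''L2: "square_integrable M s''" by (rule W_L2[OF s''])
    have "s = (\<lambda>z. s'' z + c * u z)" unfolding s'(2) s''_def u_def by (auto simp: algebra_simps)
    then have "(\<lambda>z. (g z - r z) * s z)
        = (\<lambda>z. (g z - r0 z) * s'' z - a / n * (u z * s'' z) + c * ((g z - r0 z) * u z)
              - c * (a / n) * (u z)^2)"
      unfolding r_def by (auto simp: algebra_simps power2_eq_square)
    moreover have "integrable M (\<lambda>z. (g z - r0 z) * s'' z)" "integrable M (\<lambda>z. u z * s'' z)"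
      "integrable M (\<lambda>z. (g z - r0 z) * u z)" "integrable M (\<lambda>z. (u z)^2)"
      using square_integrable_imp_integrable_mult g_r0 u s''L2 u unfolding square_integrable_def
      by auto
    moreover have "integral\<^sup>L M (\<lambda>z. (g z - r0 z) * s'' z) = 0"
      using r0 s'' unfolding orth_proj_def by blast
    moreover have "integral\<^sup>L M (\<lambda>z. u z * s'' z) = 0"
      using re s'' unfolding orth_proj_def u_def by blast
    ultimately have "integral\<^sup>L M (\<lambda>z. (g z - r z) * s z) = c * a - c * (a / n) * n"
      unfolding a_def n_def by simp
    then show ?thesis using a_n by (cases "n = 0") simp_all
  qed
  ultimately show ?thesis unfolding orth_proj_def by blast
qed

lemma tpoly_iff: "tpoly m s \<longleftrightarrow> (\<exists>c. s = (\<lambda>z. \<Sum>k\<le>m. c k * (snd z)^k))"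
  unfolding tpoly_def by (simp add: split_beta')

lemma tpoly_0: "tpoly 0 s \<longleftrightarrow> (\<exists>c. s = (\<lambda>z. c))"
  unfolding tpoly_iff
proof
  show "\<exists>c. s = (\<lambda>z. c)" if "\<exists>c. s = (\<lambda>z. \<Sum>k\<le>0. c k * (snd z)^k)"
    using that by auto
next
  assume "\<exists>c. s = (\<lambda>z. c)"
  then obtain c where "s = (\<lambda>z. c)" by blast
  then show "\<exists>c'. s = (\<lambda>z. \<Sum>k\<le>0. c' k * (snd z)^k)"
    by (intro exI[of _ "\<lambda>_. c"]) simp
qed

lemma tpoly_Suc:
  "tpoly (Suc m) s \<longleftrightarrow> (\<exists>s' c. tpoly m s' \<and> s = (\<lambda>z. s' z + c * (snd z)^Suc m))"
proof
  assume "tpoly (Suc m) s"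
  then obtain c where "s = (\<lambda>z. \<Sum>k\<le>Suc m. c k * (snd z)^k)" unfolding tpoly_iff by blast
  then show "\<exists>s' c. tpoly m s' \<and> s = (\<lambda>z. s' z + c * (snd z)^Suc m)"
    unfolding tpoly_iff by auto
next
  assume "\<exists>s' c. tpoly m s' \<and> s = (\<lambda>z. s' z + c * (snd z)^Suc m)"
  then obtain c d where s: "s = (\<lambda>z. (\<Sum>k\<le>m. c k * (snd z)^k) + d * (snd z)^Suc m)"
    unfolding tpoly_iff by blast
  have "s = (\<lambda>z. \<Sum>k\<le>Suc m. (c(Suc m := d)) k * (snd z)^k)"
    unfolding s by simp
  then show "tpoly (Suc m) s" unfolding tpoly_iff by blast
qed

lemma tpoly_add:
  assumes "tpoly m a" "tpoly m b"
  shows "tpoly m (\<lambda>z. a z + b z)"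
proof -
  obtain c d where "a = (\<lambda>z. \<Sum>k\<le>m. c k * (snd z)^k)" "b = (\<lambda>z. \<Sum>k\<le>m. d k * (snd z)^k)"
    using assms unfolding tpoly_iff by blast
  then show ?thesis
    unfolding tpoly_iff by (intro exI[of _ "\<lambda>k. c k + d k"]) (simp add: sum.distrib algebra_simps)
qed

lemma tpoly_scale:
  assumes "tpoly m a"
  shows "tpoly m (\<lambda>z. c * a z)"
proof -
  obtain d where "a = (\<lambda>z. \<Sum>k\<le>m. d k * (snd z)^k)"
    using assms unfolding tpoly_iff by blast
  then show ?thesis
    unfolding tpoly_iff by (intro exI[of _ "\<lambda>k. c * d k"]) (simp add: sum_distrib_left ac_simps)
qed

lemma tpoly_square_integrable:
  fixes M :: "'d::finite pt measure"
  assumes powers: "\<And>k. square_integrable M (\<lambda>z. (snd z)^k)"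
  shows "tpoly m s \<Longrightarrow> square_integrable M s"
proof (induction m arbitrary: s)
  case 0
  then show ?case using square_integrable_cmult[OF powers[of 0]] by (auto simp: tpoly_0)
next
  case (Suc m)
  then obtain s' c where "tpoly m s'" "s = (\<lambda>z. s' z + c * (snd z)^Suc m)"
    unfolding tpoly_Suc by blast
  then show ?case
    using square_integrable_add[OF Suc.IH square_integrable_cmult[OF powers]] by blast
qed

lemma orth_proj_tpoly_exists:
  fixes M :: "'d::finite pt measure"
  assumes powers: "\<And>k. square_integrable M (\<lambda>z. (snd z)^k)"
  shows "square_integrable M g \<Longrightarrow> \<exists>r. orth_proj M (tpoly m) g r"
proof (induction m arbitrary: g)
  case 0
  have zero_proj: "\<exists>r. orth_proj M (\<lambda>s. s = (\<lambda>_. 0)) f r" for f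
    unfolding orth_proj_def by simp
  show ?case
    by (rule orth_proj_extend[where W = "\<lambda>s. s = (\<lambda>_. 0)" and e = "\<lambda>z. (snd z)^0"])
       (use 0 zero_proj powers[of 0] square_integrable_cmult[OF powers[of 0], of 0] in \<open>auto simp: tpoly_0\<close>)
next
  case (Suc m)
  show ?case
    by (rule orth_proj_extend[OF tpoly_square_integrable[OF powers] tpoly_add tpoly_scale Suc.IH
          powers tpoly_Suc Suc.prems])
qed

section \<open>Functions on a bounded domain\<close>

lemma set_integral_eq_restrict:
  fixes f :: "'a::euclidean_space \<Rightarrow> real"
  shows "K \<in> sets lborel \<Longrightarrow> (LINT z:K|lborel. f z) = integral\<^sup>L (restrict_space lborel K) f"
  unfolding set_lebesgue_integral_def using integral_restrict_space[of K lborel f] by simp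

lemma nsq_eq_restrict:
  "K \<in> sets lborel \<Longrightarrow> nsq K f = integral\<^sup>L (restrict_space lborel K) (\<lambda>z. (f z)^2)"
  unfolding nsq_def by (rule set_integral_eq_restrict)

lemma L2_iff_square_integrable:
  "K \<in> sets lborel \<Longrightarrow> L2 K f \<longleftrightarrow> square_integrable (restrict_space lborel K) f"
  unfolding L2_def square_integrable_def set_borel_measurable_def
  by (subst borel_measurable_restrict_space_iff, simp, subst set_integrable_eq, auto)

lemma L2_diff: "K \<in> sets lborel \<Longrightarrow> L2 K f \<Longrightarrow> L2 K g \<Longrightarrow> L2 K (\<lambda>z. f z - g z)"
  by (simp add: L2_iff_square_integrable square_integrable_diff)

lemma finite_measure_restrict_bounded:
  fixes K :: "'a::euclidean_space set"
  assumes "bounded K" "K \<in> sets lborel"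
  shows "finite_measure (restrict_space lborel K)"
  by (rule finite_measureI)
     (use assms emeasure_bounded_finite[OF assms(1)] in
      \<open>auto simp: space_restrict_space emeasure_restrict_space\<close>)

lemma square_integrable_continuous_on_bounded:
  fixes K :: "'a::euclidean_space set"
  assumes K: "bounded K" "K \<in> sets lborel" and f: "continuous_on UNIV f"
  shows "square_integrable (restrict_space lborel K) f"
proof -
  have "compact (f ` closure K)"
    using K by (intro compact_continuous_image continuous_on_subset[OF f]) (auto simp: compact_closure)
  then obtain B where B: "\<forall>y\<in>f ` closure K. norm y \<le> B"
    using compact_imp_bounded bounded_iff by metis
  show ?thesis
  proof (rule square_integrable_bounded[OF finite_measure_restrict_bounded[OF K]])
    show "f \<in> borel_measurable (restrict_space lborel K)"
      using f borel_measurable_continuous_onI by (intro measurable_restrict_space1) simp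
    show "\<bar>f z\<bar> \<le> B" if "z \<in> space (restrict_space lborel K)" for z
      using that B closure_subset by (auto simp: space_restrict_space)
  qed
qed

lemma mean_square_le_nsq:
  fixes Kx :: "(real^'d::finite) set"
  assumes Kx: "bounded Kx" "Kx \<in> sets lborel" and tr: "L2 Kx tr"
    and g: "continuous_on UNIV g" and mean_eq: "(LINT x:Kx|lborel. g x - tr x) = 0"
  shows "measure lborel Kx * (mean Kx g)^2 \<le> nsq Kx tr"
proof -
  define M where "M = restrict_space lborel Kx"
  have M: "finite_measure M" unfolding M_def by (rule finite_measure_restrict_bounded[OF Kx])
  have tr_M: "square_integrable M tr"
    using tr L2_iff_square_integrable[OF Kx(2)] unfolding M_def by simp
  have g_M: "square_integrable M g"
    unfolding M_def by (rule square_integrable_continuous_on_bounded[OF Kx g])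
  have "integrable M tr" "integrable M g"
    using tr_M g_M finite_measure.square_integrable_imp_integrable[OF M]
    unfolding square_integrable_def by auto
  moreover have "integral\<^sup>L M (\<lambda>x. g x - tr x) = 0"
    using mean_eq unfolding set_integral_eq_restrict[OF Kx(2)] M_def .
  ultimately have "(LINT x:Kx|lborel. g x) = integral\<^sup>L M tr"
    unfolding set_integral_eq_restrict[OF Kx(2)] M_def by simp
  moreover have "measure M (space M) = measure lborel Kx"
    unfolding M_def using Kx(2) by (simp add: measure_restrict_space space_restrict_space)
  ultimately have "measure lborel Kx * (mean Kx g)^2 = (integral\<^sup>L M tr)^2 / measure M (space M)"
    unfolding mean_def by (simp add: power2_eq_square)
  also have "\<dots> \<le> integral\<^sup>L M (\<lambda>x. (tr x)^2)"
    using square_integral_le_measure_mult[OF M tr_M] integral_square_nonneg[of M tr]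
    by (cases "measure M (space M) = 0") (simp_all add: divide_le_eq mult.commute)
  finally show ?thesis unfolding nsq_eq_restrict[OF Kx(2)] M_def .
qed

lemma polytopal_open: "polytopal Kx \<Longrightarrow> open Kx"
  unfolding polytopal_def by auto

lemma polytopal_bounded: "polytopal Kx \<Longrightarrow> bounded Kx"
proof -
  assume "polytopal Kx"
  then obtain P where P: "finite P" "\<forall>Q\<in>P. polytope Q" "Kx = interior (\<Union>P)"
    unfolding polytopal_def by blast
  then have "compact (\<Union>P)" using polytope_imp_compact by (intro compact_Union) auto
  then show "bounded Kx" using P(3) interior_subset compact_imp_bounded bounded_subset by metis
qed

lemma polytopal_diameter_pos: "polytopal Kx \<Longrightarrow> diameter Kx > 0"
proof -
  assume Kx: "polytopal Kx"
  then obtain x where "x \<in> Kx" unfolding polytopal_def by blast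
  then obtain e where e: "e > 0" "ball x e \<subseteq> Kx"
    using polytopal_open[OF Kx] open_contains_ball by blast
  then have "diameter (ball x e) \<le> diameter Kx"
    using diameter_subset polytopal_bounded[OF Kx] by blast
  then show "diameter Kx > 0" using e(1) by simp
qed

lemma polytopal_cylinder:
  fixes t0 t1 :: real
  assumes "polytopal Kx"
  shows "Kx \<times> {t0<..<t1} \<in> sets lborel" "bounded (Kx \<times> {t0<..<t1})"
proof -
  have "open (Kx \<times> {t0<..<t1})"
    using polytopal_open[OF assms] by (intro open_Times) auto
  then show "Kx \<times> {t0<..<t1} \<in> sets lborel" by simp
  show "bounded (Kx \<times> {t0<..<t1})"
    using polytopal_bounded[OF assms] by (intro bounded_Times) auto
qed

section \<open>Continuously differentiable functions\<close>

definition C1 :: "('a::real_normed_vector \<Rightarrow> real) \<Rightarrow> bool" where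
  "C1 f \<longleftrightarrow> (\<exists>f'. (\<forall>z. (f has_derivative f' z) (at z)) \<and> (\<forall>b. continuous_on UNIV (\<lambda>z. f' z b)))"

lemma C1_has_derivative: "C1 f \<Longrightarrow> (f has_derivative frechet_derivative f (at z)) (at z)"
  unfolding C1_def using frechet_derivative_at by metis

lemma C1_continuous_on: "C1 f \<Longrightarrow> continuous_on UNIV f"
  using C1_has_derivative has_derivative_continuous continuous_on_eq_continuous_at[OF open_UNIV]
  by blast

lemma C1_derivative_continuous_on:
  assumes "C1 f"
  shows "continuous_on UNIV (\<lambda>z. frechet_derivative f (at z) b)"
proof -
  obtain f' where f': "\<And>z. (f has_derivative f' z) (at z)" "continuous_on UNIV (\<lambda>z. f' z b)"
    using assms unfolding C1_def by blast
  have eq: "(\<lambda>z. frechet_derivative f (at z) b) = (\<lambda>z. f' z b)"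
    using frechet_derivative_at[OF f'(1)] by metis
  show ?thesis unfolding eq by (rule f'(2))
qed

lemma C1_const: "C1 (\<lambda>z. c)"
  unfolding C1_def by (rule exI[of _ "\<lambda>z h. 0"]) auto

lemma C1_bounded_linear: "bounded_linear L \<Longrightarrow> C1 L"
  unfolding C1_def by (rule exI[of _ "\<lambda>z. L"]) (auto simp: bounded_linear_imp_has_derivative)

lemma C1_add:
  assumes "C1 f" "C1 g"
  shows "C1 (\<lambda>z. f z + g z)"
  unfolding C1_def
  by (rule exI[of _ "\<lambda>z h. frechet_derivative f (at z) h + frechet_derivative g (at z) h"])
     (use assms in \<open>auto intro!: has_derivative_add C1_has_derivative continuous_intros
        C1_derivative_continuous_on\<close>)

lemma C1_mult:
  assumes "C1 f" "C1 g"
  shows "C1 (\<lambda>z. f z * g z)"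
  unfolding C1_def
  by (rule exI[of _ "\<lambda>z h. f z * frechet_derivative g (at z) h + frechet_derivative f (at z) h * g z"])
     (use assms in \<open>auto intro!: has_derivative_mult C1_has_derivative continuous_intros
        C1_derivative_continuous_on C1_continuous_on[OF assms(1)] C1_continuous_on[OF assms(2)]\<close>)

lemma C1_sum: "(\<And>a. a \<in> A \<Longrightarrow> C1 (f a)) \<Longrightarrow> C1 (\<lambda>z. \<Sum>a\<in>A. f a z)"
  by (induction A rule: infinite_finite_induct) (auto simp: C1_const C1_add)

lemma C1_prod: "(\<And>a. a \<in> A \<Longrightarrow> C1 (f a)) \<Longrightarrow> C1 (\<lambda>z. \<Prod>a\<in>A. f a z)"
  by (induction A rule: infinite_finite_induct) (auto simp: C1_const C1_mult)

lemma C1_power: "C1 f \<Longrightarrow> C1 (\<lambda>z. (f z)^n)"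
  by (induction n) (auto simp: C1_const C1_mult)

lemma ppoly_C1: "ppoly p (q :: 'd::finite pt \<Rightarrow> real) \<Longrightarrow> C1 q"
proof -
  assume "ppoly p q"
  then obtain c where q: "q = (\<lambda>z. \<Sum>\<alpha>\<in>{\<alpha>. sum (fst \<alpha>) UNIV + snd \<alpha> \<le> p}.
              c \<alpha> * (\<Prod>i\<in>UNIV. (fst z $ i) ^ (fst \<alpha> i)) * (snd z) ^ (snd \<alpha>))"
    unfolding ppoly_def by (auto simp: split_beta')
  have "C1 (\<lambda>z::'d pt. fst z $ i)" for i
    by (intro C1_bounded_linear bounded_linear_compose[OF bounded_linear_vec_nth bounded_linear_fst])
  moreover have "C1 (\<lambda>z::'d pt. snd z)" by (rule C1_bounded_linear[OF bounded_linear_snd])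
  ultimately show ?thesis unfolding q by (intro C1_sum C1_mult C1_const C1_prod C1_power)
qed

lemma smooth_C1:
  fixes \<phi> :: "'a::euclidean_space \<Rightarrow> real"
  assumes "smooth \<phi>"
  shows "C1 \<phi>"
proof -
  have "cdiff (Suc 0) \<phi>" using assms unfolding smooth_def by blast
  then have diff: "\<phi> differentiable_on UNIV"
    and cont: "\<And>i. i \<in> Basis \<Longrightarrow> continuous_on UNIV (\<lambda>z. frechet_derivative \<phi> (at z) i)"
    by auto
  have der: "(\<phi> has_derivative frechet_derivative \<phi> (at z)) (at z)" for z
    using diff frechet_derivative_works differentiable_on_def by blast
  have eq: "(\<lambda>z. frechet_derivative \<phi> (at z) b)
      = (\<lambda>z. \<Sum>i\<in>Basis. (b \<bullet> i) * frechet_derivative \<phi> (at z) i)" for b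
    using Linear_Algebra.linear_componentwise[OF has_derivative_linear[OF der], where x = b and j = 1]
    by (simp add: mult.commute)
  have "continuous_on UNIV (\<lambda>z. frechet_derivative \<phi> (at z) b)" for b
    by (subst eq) (intro continuous_intros cont)
  then show ?thesis
    unfolding C1_def by (intro exI[of _ "\<lambda>z. frechet_derivative \<phi> (at z)"]) (use der in blast)
qed

section \<open>Integration by parts and weak derivatives\<close>

lemma integrable_continuous_compact_support:
  fixes f :: "'a::euclidean_space \<Rightarrow> real"
  assumes "continuous_on UNIV f" "compact C" "\<And>z. z \<notin> C \<Longrightarrow> f z = 0"
  shows "integrable lborel f"
proof -
  have "(\<lambda>z. indicator C z *\<^sub>R f z) = f"
    using assms(3) by (intro ext) (simp split: split_indicator)
  then show ?thesis
    using borel_integrable_compact[OF assms(2) continuous_on_subset[OF assms(1)]] by simp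
qed

lemma set_integral_eq_integral_vanishing_outside:
  fixes f :: "'a::euclidean_space \<Rightarrow> real"
  assumes "\<And>z. z \<notin> K \<Longrightarrow> f z = 0"
  shows "(LINT z:K|lborel. f z) = integral\<^sup>L lborel f"
proof -
  have "(\<lambda>z. indicator K z *\<^sub>R f z) = f"
    using assms by (intro ext) (simp split: split_indicator)
  then show ?thesis unfolding set_lebesgue_integral_def by simp
qed

lemma lborel_integrable_translate:
  fixes f :: "'a::euclidean_space \<Rightarrow> real"
  assumes f: "integrable lborel f"
  shows "integrable lborel (\<lambda>z. f (z + c))"
proof -
  have "integrable (distr lborel borel ((+) c)) f \<longleftrightarrow> integrable lborel (\<lambda>z. f (c + z))"
    using f by (intro integrable_distr_eq) auto
  then show ?thesis using f unfolding lborel_distr_plus by (simp add: add.commute)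
qed

lemma lborel_integral_translate:
  fixes f :: "'a::euclidean_space \<Rightarrow> real"
  assumes f: "integrable lborel f"
  shows "integral\<^sup>L lborel (\<lambda>z. f (z + c)) = integral\<^sup>L lborel f"
proof -
  have "integral\<^sup>L lborel (\<lambda>z. f (c + z)) = integral\<^sup>L (distr lborel borel ((+) c)) f"
    using f by (intro integral_distr[symmetric]) auto
  then show ?thesis unfolding lborel_distr_plus by (simp add: add.commute)
qed

lemma has_derivative_eq_0_outside:
  fixes f :: "'a::real_normed_vector \<Rightarrow> real"
  assumes "(f has_derivative f') (at z)" "closed C" "z \<notin> C" "\<And>y. y \<notin> C \<Longrightarrow> f y = 0"
  shows "f' = (\<lambda>h. 0)"
proof -
  have "((\<lambda>y. 0::real) has_derivative f') (at z)"
    using assms by (intro has_derivative_transform_within_open[OF assms(1), of "- C"]) auto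
  then show ?thesis using has_derivative_unique has_derivative_const by blast
qed

lemma has_real_derivative_along_line:
  fixes F :: "'a::real_normed_vector \<Rightarrow> real"
  assumes "(F has_derivative F') (at (z + s *\<^sub>R b))"
  shows "((\<lambda>s. F (z + s *\<^sub>R b)) has_real_derivative F' b) (at s)"
proof -
  have "((\<lambda>s. z + s *\<^sub>R b) has_derivative (\<lambda>s'. s' *\<^sub>R b)) (at s)"
    by (auto intro!: derivative_eq_intros)
  then have "((\<lambda>s. F (z + s *\<^sub>R b)) has_derivative (\<lambda>s'. F' (s' *\<^sub>R b))) (at s)"
    using has_derivative_compose assms by blast
  moreover have "F' (s' *\<^sub>R b) = s' * F' b" for s'
    using linear_cmul[OF has_derivative_linear[OF assms]] by simp
  moreover have "(\<lambda>s'. s' * F' b) = (*) (F' b)"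
    by (auto simp: mult.commute)
  ultimately show ?thesis
    unfolding has_field_derivative_def by simp
qed

lemma difference_quotient_tendsto:
  fixes F :: "'a::real_normed_vector \<Rightarrow> real"
  assumes "(F has_derivative F') (at z)" and "filterlim h (at 0) sequentially"
  shows "(\<lambda>n. (F (z + h n *\<^sub>R b) - F z) / h n) \<longlonglongrightarrow> F' b"
proof -
  have "((\<lambda>s. F (z + s *\<^sub>R b)) has_real_derivative F' b) (at 0)"
    using has_real_derivative_along_line[of F F' z 0 b] assms(1) by simp
  then have "((\<lambda>s. (F (z + s *\<^sub>R b) - F z) / s) \<longlongrightarrow> F' b) (at 0)"
    unfolding has_field_derivative_iff by simp
  then show ?thesis using assms(2) by (rule filterlim_compose)
qed

lemma difference_quotient_mean_value:
  fixes F :: "'a::real_normed_vector \<Rightarrow> real"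
  assumes "\<And>z. (F has_derivative F' z) (at z)" and "0 < h"
  obtains \<xi> where "0 < \<xi>" "\<xi> < h" "(F (z + h *\<^sub>R b) - F z) / h = F' (z + \<xi> *\<^sub>R b) b"
proof -
  have "((\<lambda>s. F (z + s *\<^sub>R b)) has_real_derivative F' (z + s *\<^sub>R b) b) (at s)" for s
    using has_real_derivative_along_line assms(1) by blast
  then obtain \<xi> where "0 < \<xi>" "\<xi> < h"
    "F (z + h *\<^sub>R b) - F (z + 0 *\<^sub>R b) = (h - 0) * F' (z + \<xi> *\<^sub>R b) b"
    using MVT2[OF assms(2), where f = "\<lambda>s. F (z + s *\<^sub>R b)"
        and f' = "\<lambda>s. F' (z + s *\<^sub>R b) b"] by blast
  then show ?thesis using that assms(2) by simp
qed

lemma continuous_compact_support_bounded: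
  fixes G :: "'a::euclidean_space \<Rightarrow> real"
  assumes "continuous_on UNIV G" "compact C" "\<And>z. z \<notin> C \<Longrightarrow> G z = 0"
  obtains B where "\<And>z. \<bar>G z\<bar> \<le> B"
proof -
  have "compact (G ` C)" using compact_continuous_image[OF continuous_on_subset[OF assms(1)] assms(2)]
    by simp
  then obtain B where "\<forall>y\<in>G ` C. norm y \<le> B" using compact_imp_bounded bounded_iff by metis
  then have "\<bar>G z\<bar> \<le> max B 0" for z using assms(3) by (cases "z \<in> C") auto
  then show thesis using that by blast
qed

text \<open>The difference quotients in direction b have integral 0 by translation invariance; they are
  dominated thanks to the mean value theorem and converge to the directional derivative.\<close>
lemma integral_directional_derivative_eq_0:
  fixes F :: "'a::euclidean_space \<Rightarrow> real"
  assumes F: "C1 F" and C: "compact C" and F_out: "\<And>z. z \<notin> C \<Longrightarrow> F z = 0"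
  shows "integral\<^sup>L lborel (\<lambda>z. frechet_derivative F (at z) b) = 0"
proof -
  define G where "G z = frechet_derivative F (at z) b" for z
  define h where "h n = 1 / real (Suc n)" for n
  define D where "D n z = (F (z + h n *\<^sub>R b) - F z) / h n" for n z
  have h: "0 < h n" "h n \<le> 1" for n unfolding h_def by auto
  have F_der: "(F has_derivative frechet_derivative F (at z)) (at z)" for z
    by (rule C1_has_derivative[OF F])
  have F_cont: "continuous_on UNIV F" by (rule C1_continuous_on[OF F])
  have G_cont: "continuous_on UNIV G" unfolding G_def by (rule C1_derivative_continuous_on[OF F])
  have "G z = 0" if "z \<notin> C" for z
    using has_derivative_eq_0_outside[OF F_der compact_imp_closed[OF C] that F_out]
    unfolding G_def by simp
  then obtain B where B: "\<And>z. \<bar>G z\<bar> \<le> B"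
    using continuous_compact_support_bounded[OF G_cont C] by blast
  obtain R where R: "\<And>z. z \<in> C \<Longrightarrow> norm z \<le> R" using compact_imp_bounded[OF C] bounded_iff by metis
  define C' where "C' = cball (0::'a) (R + norm b)"
  have F_int: "integrable lborel F"
    by (rule integrable_continuous_compact_support[OF F_cont C F_out])
  have "integral\<^sup>L lborel (D n) = 0" for n
    using lborel_integral_translate[OF F_int, of "h n *\<^sub>R b"]
      lborel_integrable_translate[OF F_int, of "h n *\<^sub>R b"] F_int
    unfolding D_def by simp
  moreover have "(\<lambda>n. integral\<^sup>L lborel (D n)) \<longlonglongrightarrow> integral\<^sup>L lborel G"
  proof (rule integral_dominated_convergence[where w = "\<lambda>z. B * indicator C' z"])
    show "G \<in> borel_measurable lborel" "D n \<in> borel_measurable lborel" for n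
      unfolding D_def using G_cont F_cont h(1)[of n]
      by (auto intro!: borel_measurable_continuous_onI continuous_intros
          continuous_on_compose2[OF F_cont])
    show "integrable lborel (\<lambda>z. B * indicator C' z)"
      unfolding C'_def by (intro integrable_mult_right integrable_real_indicator emeasure_bounded_finite) auto
    have "filterlim h (at 0) sequentially"
      using h(1) LIMSEQ_inverse_real_of_nat unfolding filterlim_at h_def by (auto simp: inverse_eq_divide)
    then show "AE z in lborel. (\<lambda>n. D n z) \<longlonglongrightarrow> G z"
      unfolding D_def G_def using difference_quotient_tendsto[OF F_der] by simp
    show "AE z in lborel. norm (D n z) \<le> B * indicator C' z" for n
    proof (rule AE_I2)
      fix z
      show "norm (D n z) \<le> B * indicator C' z"
      proof (cases "z \<in> C'")
        case True
        obtain \<xi> where "D n z = G (z + \<xi> *\<^sub>R b)"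
          using difference_quotient_mean_value[OF F_der h(1)] unfolding D_def G_def by metis
        then show ?thesis using True B by simp
      next
        case False
        then have far: "norm z > R + norm b" unfolding C'_def by auto
        have "norm z \<le> norm (z + h n *\<^sub>R b) + norm (h n *\<^sub>R b)"
          using norm_triangle_ineq4[of "z + h n *\<^sub>R b" "h n *\<^sub>R b"] by simp
        moreover have "norm (h n *\<^sub>R b) \<le> norm b" using h[of n] by (simp add: mult_left_le_one_le)
        ultimately have "z \<notin> C" "z + h n *\<^sub>R b \<notin> C"
          using R[of z] R[of "z + h n *\<^sub>R b"] far norm_ge_zero[of b] by linarith+
        then show ?thesis unfolding D_def using F_out False by simp
      qed
    qed
  qed
  ultimately show ?thesis unfolding G_def by (simp add: LIMSEQ_const_iff)
qed

lemma set_integral_by_parts: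
  fixes q \<phi> :: "'a::euclidean_space \<Rightarrow> real"
  assumes q: "C1 q" and \<phi>: "C1 \<phi>" "compact (tsupport \<phi>)" "tsupport \<phi> \<subseteq> K"
  shows "(LINT z:K|lborel. q z * frechet_derivative \<phi> (at z) b)
       = - (LINT z:K|lborel. frechet_derivative q (at z) b * \<phi> z)"
proof -
  define C where "C = tsupport \<phi>"
  have C: "compact C" using \<phi> unfolding C_def by simp
  have \<phi>_out: "\<phi> z = 0" if "z \<notin> C" for z
    using that closure_subset[of "{z. \<phi> z \<noteq> 0}"] unfolding C_def tsupport_def by auto
  have d\<phi>_out: "frechet_derivative \<phi> (at z) = (\<lambda>h. 0)" if "z \<notin> C" for z
    by (rule has_derivative_eq_0_outside[OF C1_has_derivative[OF \<phi>(1)] compact_imp_closed[OF C]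
          that \<phi>_out])
  define f1 where "f1 z = q z * frechet_derivative \<phi> (at z) b" for z
  define f2 where "f2 z = frechet_derivative q (at z) b * \<phi> z" for z
  have cont: "continuous_on UNIV q" "continuous_on UNIV \<phi>"
    "continuous_on UNIV (\<lambda>z. frechet_derivative q (at z) b)"
    "continuous_on UNIV (\<lambda>z. frechet_derivative \<phi> (at z) b)"
    using q \<phi>(1) by (simp_all add: C1_continuous_on C1_derivative_continuous_on)
  have "integrable lborel f1"
    by (rule integrable_continuous_compact_support[OF _ C])
       (simp_all add: f1_def d\<phi>_out cont continuous_intros)
  moreover have "integrable lborel f2"
    by (rule integrable_continuous_compact_support[OF _ C])
       (simp_all add: f2_def \<phi>_out cont continuous_intros)
  moreover have "frechet_derivative (\<lambda>z. q z * \<phi> z) (at z) b = f1 z + f2 z" for z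
    unfolding f1_def f2_def
    using frechet_derivative_at[OF has_derivative_mult[OF C1_has_derivative[OF q]
          C1_has_derivative[OF \<phi>(1)]], symmetric] by simp
  then have "integral\<^sup>L lborel (\<lambda>z. f1 z + f2 z) = 0"
    using integral_directional_derivative_eq_0[OF C1_mult[OF q \<phi>(1)] C, of b] \<phi>_out by simp
  moreover have "(LINT z:K|lborel. f1 z) = integral\<^sup>L lborel f1"
    "(LINT z:K|lborel. f2 z) = integral\<^sup>L lborel f2"
    using \<phi>(3) \<phi>_out d\<phi>_out unfolding f1_def f2_def C_def
    by (intro set_integral_eq_integral_vanishing_outside; force)+
  ultimately show ?thesis unfolding f1_def f2_def by simp
qed

lemma weak_deriv_diff_C1:
  fixes K :: "'a::euclidean_space set"
  assumes K: "K \<in> sets lborel" "bounded K" and v: "L2 K v" and g: "L2 K g"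
    and wd: "weak_deriv K v b g" and q: "C1 q"
  shows "weak_deriv K (\<lambda>z. v z - q z) b (\<lambda>z. g z - frechet_derivative q (at z) b)"
  unfolding weak_deriv_def
proof (intro allI impI)
  fix \<phi> assume \<phi>: "test_fun K \<phi>"
  define M where "M = restrict_space lborel K"
  define d\<phi> where "d\<phi> z = frechet_derivative \<phi> (at z) b" for z
  define dq where "dq z = frechet_derivative q (at z) b" for z
  have \<phi>_C1: "C1 \<phi>" using \<phi> smooth_C1 unfolding test_fun_def by blast
  have L2: "square_integrable M v" "square_integrable M g" "square_integrable M q"
    "square_integrable M dq" "square_integrable M \<phi>" "square_integrable M d\<phi>"
    using v g L2_iff_square_integrable[OF K(1)] square_integrable_continuous_on_bounded[OF K(2,1)]
      C1_continuous_on[OF q] C1_continuous_on[OF \<phi>_C1] C1_derivative_continuous_on[OF q]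
      C1_derivative_continuous_on[OF \<phi>_C1]
    unfolding M_def dq_def d\<phi>_def by auto
  have "integral\<^sup>L M (\<lambda>z. v z * d\<phi> z) = - integral\<^sup>L M (\<lambda>z. g z * \<phi> z)"
    using wd \<phi> unfolding weak_deriv_def set_integral_eq_restrict[OF K(1)] M_def d\<phi>_def by blast
  moreover have "integral\<^sup>L M (\<lambda>z. q z * d\<phi> z) = - integral\<^sup>L M (\<lambda>z. dq z * \<phi> z)"
    using set_integral_by_parts[OF q \<phi>_C1, of K b] \<phi>
    unfolding test_fun_def set_integral_eq_restrict[OF K(1)] M_def d\<phi>_def dq_def by blast
  moreover have "integrable M (\<lambda>z. v z * d\<phi> z)" "integrable M (\<lambda>z. q z * d\<phi> z)"
    "integrable M (\<lambda>z. g z * \<phi> z)" "integrable M (\<lambda>z. dq z * \<phi> z)"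
    using L2 by (auto intro: square_integrable_imp_integrable_mult)
  ultimately have "integral\<^sup>L M (\<lambda>z. (v z - q z) * d\<phi> z) = - integral\<^sup>L M (\<lambda>z. (g z - dq z) * \<phi> z)"
    by (simp add: left_diff_distrib)
  then show "(LINT z:K|lborel. (v z - q z) * frechet_derivative \<phi> (at z) b)
      = - (LINT z:K|lborel. (g z - frechet_derivative q (at z) b) * \<phi> z)"
    unfolding set_integral_eq_restrict[OF K(1)] M_def d\<phi>_def dq_def .
qed

lemma H1w_diff_C1:
  fixes K :: "'d::finite pt set"
  assumes K: "K \<in> sets lborel" "bounded K" and v: "H1w K v gx gt" and q: "C1 q"
  shows "H1w K (\<lambda>z. v z - q z) (\<lambda>i z. gx i z - dx i q z) (\<lambda>z. gt z - dt q z)"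
proof -
  have q_L2: "L2 K q" "L2 K (dx i q)" "L2 K (dt q)" for i
    using square_integrable_continuous_on_bounded[OF K(2,1)] L2_iff_square_integrable[OF K(1)]
      C1_continuous_on[OF q] C1_derivative_continuous_on[OF q]
    unfolding dx_def dt_def by auto
  have v_L2: "L2 K v" "L2 K (gx i)" "L2 K gt"
    and v_wd: "weak_deriv K v (ex i) (gx i)" "weak_deriv K v et gt" for i
    using v unfolding H1w_def by auto
  show ?thesis
    using L2_diff[OF K(1)] q_L2 v_L2 weak_deriv_diff_C1[OF K v_L2(1) _ v_wd(1) q]
      weak_deriv_diff_C1[OF K v_L2(1,3) v_wd(2) q]
    unfolding H1w_def dx_def dt_def by simp
qed

section \<open>Local estimates for the projection\<close>

lemma nsq_nonneg: "0 \<le> nsq K f"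
  unfolding nsq_def set_lebesgue_integral_def by (rule integral_nonneg_AE) simp

lemma gradsq_nonneg: "0 \<le> gradsq K f"
  unfolding gradsq_def by (intro sum_nonneg nsq_nonneg)

lemma rhsK_nonneg: "0 \<le> rhsK Kx t0 t1 w gwx gwt"
  unfolding rhsK_def by (intro add_nonneg_nonneg sum_nonneg divide_nonneg_nonneg
      mult_nonneg_nonneg nsq_nonneg) simp_all

lemma gradient_nsq_le_rhsK: "(\<Sum>i\<in>UNIV. nsq (Kx \<times> {t0<..<t1}) (gwx i)) \<le> rhsK Kx t0 t1 w gwx gwt"
  unfolding rhsK_def
  using nsq_nonneg[of "Kx \<times> {t0<..<t1}" w] nsq_nonneg[of "Kx \<times> {t0<..<t1}" gwt]
  by (simp add: add_increasing)

lemma PiN_gradient_pythagoras: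
  fixes Kx :: "(real^'d::finite) set" and t0 t1 :: real
  defines "K \<equiv> Kx \<times> {t0<..<t1}"
  assumes K: "K \<in> sets lborel" "bounded K" and gx: "\<And>i. L2 K (gx i)"
    and q: "is_PiN p Kx t0 t1 v gx tr q"
  shows "gradsq K q + (\<Sum>i\<in>UNIV. nsq K (\<lambda>z. gx i z - dx i q z)) = (\<Sum>i\<in>UNIV. nsq K (gx i))"
proof -
  define M where "M = restrict_space lborel K"
  have q_poly: "ppoly p q" using q unfolding is_PiN_def by blast
  have dq: "square_integrable M (dx i q)" for i
    unfolding M_def dx_def
    by (rule square_integrable_continuous_on_bounded[OF K(2,1)
          C1_derivative_continuous_on[OF ppoly_C1[OF q_poly]]])
  have "(\<Sum>i\<in>UNIV. integral\<^sup>L M (\<lambda>z. dx i q z * (dx i q z - gx i z))) = 0"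
    using q q_poly unfolding is_PiN_def K_def[symmetric] set_integral_eq_restrict[OF K(1)] M_def
    by blast
  moreover have "nsq K (\<lambda>z. gx i z - dx i q z)
      = nsq K (gx i) - nsq K (dx i q) + 2 * integral\<^sup>L M (\<lambda>z. dx i q z * (dx i q z - gx i z))" for i
    using integral_square_diff_eq[OF _ dq] gx L2_iff_square_integrable[OF K(1)]
    unfolding nsq_eq_restrict[OF K(1)] M_def by blast
  ultimately show ?thesis
    unfolding gradsq_def by (simp add: sum.distrib sum_subtractf sum_distrib_left[symmetric])
qed

lemma PiN_gradient_le:
  fixes Kx :: "(real^'d::finite) set" and t0 t1 :: real
  defines "K \<equiv> Kx \<times> {t0<..<t1}"
  assumes K: "K \<in> sets lborel" "bounded K" and gx: "\<And>i. L2 K (gx i)"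
    and q: "is_PiN p Kx t0 t1 v gx tr q"
  shows "gradsq K q \<le> (\<Sum>i\<in>UNIV. nsq K (gx i))"
    and "(\<Sum>i\<in>UNIV. nsq K (\<lambda>z. gx i z - dx i q z)) \<le> (\<Sum>i\<in>UNIV. nsq K (gx i))"
proof -
  have "0 \<le> (\<Sum>i\<in>UNIV. nsq K (\<lambda>z. gx i z - dx i q z))" by (intro sum_nonneg nsq_nonneg)
  then show "gradsq K q \<le> (\<Sum>i\<in>UNIV. nsq K (gx i))"
    and "(\<Sum>i\<in>UNIV. nsq K (\<lambda>z. gx i z - dx i q z)) \<le> (\<Sum>i\<in>UNIV. nsq K (gx i))"
    using PiN_gradient_pythagoras[OF K[unfolded K_def] gx[unfolded K_def] q] gradsq_nonneg[of K q]
    unfolding K_def by linarith+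
qed

lemma PiN_bottom_mean_square_le:
  assumes Kx: "bounded Kx" "Kx \<in> sets lborel" and tr: "bottom_trace Kx t0 t1 v gt tr"
    and q: "is_PiN p Kx t0 t1 v gx tr q"
  shows "measure lborel Kx * (mean Kx (\<lambda>x. q (x, t0)))^2 \<le> nsq Kx tr"
proof (rule mean_square_le_nsq[OF Kx])
  show "L2 Kx tr" using tr unfolding bottom_trace_def by blast
  have "continuous_on UNIV q"
    using q ppoly_C1 C1_continuous_on unfolding is_PiN_def by blast
  then show "continuous_on UNIV (\<lambda>x. q (x, t0))"
    by (rule continuous_on_compose2) (auto intro!: continuous_intros)
  show "(LINT x:Kx|lborel. q (x, t0) - tr x) = 0" using q unfolding is_PiN_def by blast
qed

lemma PiN_time_projection_le:
  fixes Kx :: "(real^'d::finite) set" and t0 t1 :: real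
  defines "K \<equiv> Kx \<times> {t0<..<t1}"
  assumes K: "K \<in> sets lborel" "bounded K" and v: "L2 K v"
    and q: "is_PiN p Kx t0 t1 v gx tr q"
  shows "\<exists>r. is_tproj K p q r \<and> nsq K r \<le> nsq K v"
proof -
  define M where "M = restrict_space lborel K"
  have L2_cont: "square_integrable M f" if "continuous_on UNIV f" for f
    unfolding M_def by (rule square_integrable_continuous_on_bounded[OF K(2,1) that])
  have powers: "square_integrable M (\<lambda>z. (snd z)^k)" for k
    by (rule L2_cont) (intro continuous_intros)
  have q_L2: "square_integrable M q"
    using q ppoly_C1 C1_continuous_on L2_cont unfolding is_PiN_def by blast
  have v_L2: "square_integrable M v"
    using v L2_iff_square_integrable[OF K(1)] unfolding M_def by simp
  obtain r where r: "orth_proj M (tpoly (p - 1)) q r"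
    using orth_proj_tpoly_exists[OF powers q_L2] by blast
  then have "is_tproj K p q r"
    unfolding is_tproj_def orth_proj_def set_integral_eq_restrict[OF K(1)] M_def by blast
  moreover have "nsq K r \<le> nsq K v"
  proof -
    have r_poly: "tpoly (p - 1) r" using r unfolding orth_proj_def by blast
    have r_L2: "square_integrable M r" by (rule tpoly_square_integrable[OF powers r_poly])
    have "integral\<^sup>L M (\<lambda>z. (q z - r z) * r z) = 0"
      using r r_poly unfolding orth_proj_def by blast
    moreover have "integral\<^sup>L M (\<lambda>z. r z * (q z - v z)) = 0"
      using q r_poly unfolding is_PiN_def K_def[symmetric] set_integral_eq_restrict[OF K(1)] M_def
      by blast
    moreover have "integrable M (\<lambda>z. (q z - r z) * r z)" "integrable M (\<lambda>z. r z * (q z - v z))"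
      using square_integrable_imp_integrable_mult square_integrable_diff q_L2 r_L2 v_L2 by blast+
    moreover have "(\<lambda>z. r z * (r z - v z)) = (\<lambda>z. r z * (q z - v z) - (q z - r z) * r z)"
      by (simp add: algebra_simps)
    ultimately have "integral\<^sup>L M (\<lambda>z. r z * (r z - v z)) = 0" by simp
    then show ?thesis
      using integral_square_le_of_orthogonal[OF r_L2 v_L2]
      unfolding nsq_eq_restrict[OF K(1)] M_def by blast
  qed
  ultimately show ?thesis by blast
qed

lemma PiN_L2_bound:
  fixes Kx :: "(real^'d::finite) set" and t0 t1 :: real
  defines "K \<equiv> Kx \<times> {t0<..<t1}" and "h \<equiv> diameter Kx" and "\<tau> \<equiv> t1 - t0"
  assumes Kx: "polytopal Kx" and t: "t0 \<le> t1" and ctr: "0 \<le> ctr" and cPi: "0 \<le> cPi"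
    and v: "H1w K v gx gt" "bottom_trace Kx t0 t1 v gt tr" and q: "is_PiN p Kx t0 t1 v gx tr q"
    and trace_ineq: "\<tau> * nsq Kx tr \<le> ctr * (nsq K v + \<tau>^2 * nsq K gt)"
    and inverse_ineq: "\<And>r. is_tproj K p q r \<Longrightarrow>
          nsq K q + h^2 * gradsq K q + \<tau>^2 * nsq K (dt q)
        \<le> cPi * (h^2 * gradsq K q + nsq K r + \<tau> * measure lborel Kx * (mean Kx (\<lambda>x. q (x, t0)))^2)"
  shows "nsq K q + \<tau>^2 * nsq K (dt q) \<le> (1 + ctr) * cPi * h^2 * rhsK Kx t0 t1 v gx gt"
proof -
  have K: "K \<in> sets lborel" "bounded K" unfolding K_def by (rule polytopal_cylinder[OF Kx])+
  have h: "h > 0" unfolding h_def by (rule polytopal_diameter_pos[OF Kx])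
  define V where "V = nsq K v"
  define T where "T = nsq K gt"
  define Gx where "Gx = (\<Sum>i\<in>UNIV. nsq K (gx i))"
  have VT: "0 \<le> V" "0 \<le> T" unfolding V_def T_def by (rule nsq_nonneg)+
  have rhsK: "h^2 * rhsK Kx t0 t1 v gx gt = V + h^2 * Gx + \<tau>^2 * T"
    unfolding rhsK_def V_def T_def Gx_def K_def[symmetric] h_def[symmetric] \<tau>_def[symmetric]
    using h by (simp add: field_simps)
  have G: "gradsq K q \<le> Gx"
    using PiN_gradient_le(1)[OF K[unfolded K_def] _ q] v(1) unfolding Gx_def H1w_def K_def by blast
  obtain r where r: "is_tproj K p q r" "nsq K r \<le> V"
    using PiN_time_projection_le[OF K[unfolded K_def] _ q] v(1)
    unfolding V_def H1w_def K_def by blast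
  have "measure lborel Kx * (mean Kx (\<lambda>x. q (x, t0)))^2 \<le> nsq Kx tr"
    using PiN_bottom_mean_square_le[OF _ _ v(2) q] polytopal_bounded[OF Kx] polytopal_open[OF Kx]
    by simp
  then have "\<tau> * (measure lborel Kx * (mean Kx (\<lambda>x. q (x, t0)))^2) \<le> \<tau> * nsq Kx tr"
    using t unfolding \<tau>_def by (intro mult_left_mono) simp_all
  then have mean: "\<tau> * measure lborel Kx * (mean Kx (\<lambda>x. q (x, t0)))^2 \<le> ctr * (V + \<tau>^2 * T)"
    using trace_ineq unfolding V_def T_def mult.assoc by linarith
  have "nsq K q + \<tau>^2 * nsq K (dt q) \<le> nsq K q + h^2 * gradsq K q + \<tau>^2 * nsq K (dt q)"
    using gradsq_nonneg[of K q] by simp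
  also have "\<dots> \<le> cPi * (h^2 * gradsq K q + nsq K r + \<tau> * measure lborel Kx * (mean Kx (\<lambda>x. q (x, t0)))^2)"
    by (rule inverse_ineq[OF r(1)])
  also have "\<dots> \<le> cPi * (h^2 * Gx + V + ctr * (V + \<tau>^2 * T))"
    using G r(2) mean cPi by (intro mult_left_mono add_mono mult_left_mono) simp_all
  also have "\<dots> \<le> cPi * ((1 + ctr) * (V + h^2 * Gx + \<tau>^2 * T))"
    using VT G gradsq_nonneg[of K q] ctr cPi
    by (intro mult_left_mono) (simp_all add: algebra_simps)
  also have "\<dots> = (1 + ctr) * cPi * h^2 * rhsK Kx t0 t1 v gx gt"
    unfolding rhsK[symmetric] by (simp add: mult_ac)
  finally show ?thesis .
qed

lemma rhsK_diff_PiN_le: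
  fixes Kx :: "(real^'d::finite) set" and t0 t1 :: real
  defines "K \<equiv> Kx \<times> {t0<..<t1}" and "h \<equiv> diameter Kx" and "\<tau> \<equiv> t1 - t0"
  assumes Kx: "polytopal Kx" and v: "H1w K v gx gt" and q: "is_PiN p Kx t0 t1 v gx tr q"
    and L2_bound: "nsq K q + \<tau>^2 * nsq K (dt q) \<le> B * h^2 * rhsK Kx t0 t1 v gx gt"
  shows "rhsK Kx t0 t1 (\<lambda>z. v z - q z) (\<lambda>i z. gx i z - dx i q z) (\<lambda>z. gt z - dt q z)
       \<le> 2 * (1 + B) * rhsK Kx t0 t1 v gx gt"
proof -
  have K: "K \<in> sets lborel" "bounded K" unfolding K_def by (rule polytopal_cylinder[OF Kx])+
  have h2: "h^2 > 0" unfolding h_def using polytopal_diameter_pos[OF Kx] by simp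
  define M where "M = restrict_space lborel K"
  define R where "R = rhsK Kx t0 t1 v gx gt"
  have q_C1: "C1 q" using q ppoly_C1 unfolding is_PiN_def by blast
  have L2: "square_integrable M v" "square_integrable M gt"
    "square_integrable M q" "square_integrable M (dt q)"
    using v L2_iff_square_integrable[OF K(1)]
      square_integrable_continuous_on_bounded[OF K(2,1)]
      C1_continuous_on[OF q_C1] C1_derivative_continuous_on[OF q_C1]
    unfolding H1w_def M_def dt_def by auto
  have w: "nsq K (\<lambda>z. v z - q z) \<le> 2 * nsq K v + 2 * nsq K q"
    "nsq K (\<lambda>z. gt z - dt q z) \<le> 2 * nsq K gt + 2 * nsq K (dt q)"
    using integral_square_diff_le[OF L2(1,3)] integral_square_diff_le[OF L2(2,4)]
    unfolding nsq_eq_restrict[OF K(1)] M_def by simp_all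
  have grad_w: "(\<Sum>i\<in>UNIV. nsq K (\<lambda>z. gx i z - dx i q z)) \<le> (\<Sum>i\<in>UNIV. nsq K (gx i))"
    using PiN_gradient_le(2)[OF K[unfolded K_def] _ q] v unfolding H1w_def K_def by blast
  have "rhsK Kx t0 t1 (\<lambda>z. v z - q z) (\<lambda>i z. gx i z - dx i q z) (\<lambda>z. gt z - dt q z)
      \<le> (2 * nsq K v + 2 * nsq K q) / h^2 + (\<Sum>i\<in>UNIV. nsq K (gx i))
        + \<tau>^2 / h^2 * (2 * nsq K gt + 2 * nsq K (dt q))"
    unfolding rhsK_def K_def[symmetric] h_def[symmetric] \<tau>_def[symmetric]
    using w grad_w h2 by (intro add_mono divide_right_mono mult_left_mono) simp_all
  also have "\<dots> = 2 * (nsq K v / h^2 + \<tau>^2 / h^2 * nsq K gt) + (\<Sum>i\<in>UNIV. nsq K (gx i))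
      + 2 * ((nsq K q + \<tau>^2 * nsq K (dt q)) / h^2)"
    using h2 by (simp add: field_simps)
  also have "\<dots> \<le> 2 * R + 2 * (B * R)"
  proof -
    have "(nsq K q + \<tau>^2 * nsq K (dt q)) / h^2 \<le> B * R"
      using L2_bound h2 unfolding R_def by (simp add: divide_le_eq mult_ac)
    moreover have "2 * (nsq K v / h^2 + \<tau>^2 / h^2 * nsq K gt) + (\<Sum>i\<in>UNIV. nsq K (gx i)) \<le> 2 * R"
      using sum_nonneg[of UNIV "\<lambda>i. nsq K (gx i)", OF nsq_nonneg] nsq_nonneg
      unfolding R_def rhsK_def K_def[symmetric] h_def[symmetric] \<tau>_def[symmetric] by simp
    ultimately show ?thesis by linarith
  qed
  finally show ?thesis unfolding R_def by (simp add: algebra_simps)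
qed

lemma local_discrete_form_bound:
  fixes Kx :: "(real^'d::finite) set" and t0 t1 :: real
  defines "K \<equiv> Kx \<times> {t0<..<t1}"
  assumes Kx: "polytopal Kx" and t: "t0 \<le> t1" and \<nu>: "0 \<le> \<nu>" and ctr: "0 \<le> ctr" and cPi: "0 \<le> cPi"
    and v: "H1w K v gx gt" "bottom_trace Kx t0 t1 v gt tr" and q: "is_PiN p Kx t0 t1 v gx tr q"
    and trace_ineq: "(t1 - t0) * nsq Kx tr \<le> ctr * (nsq K v + (t1 - t0)^2 * nsq K gt)"
    and inverse_ineq: "\<And>r. is_tproj K p q r \<Longrightarrow>
          nsq K q + (diameter Kx)^2 * gradsq K q + (t1 - t0)^2 * nsq K (dt q)
        \<le> cPi * ((diameter Kx)^2 * gradsq K q + nsq K r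
                 + (t1 - t0) * measure lborel Kx * (mean Kx (\<lambda>x. q (x, t0)))^2)"
    and S_bound: "\<And>gwx gwt. H1w K (\<lambda>z. v z - q z) gwx gwt \<Longrightarrow>
          Sw \<le> cstar * rhsK Kx t0 t1 (\<lambda>z. v z - q z) gwx gwt"
  shows "\<nu> * gradsq K q + \<nu> * Sw
       \<le> 3 * max 1 cstar * \<nu> * (1 + (1 + ctr) * cPi) * rhsK Kx t0 t1 v gx gt"
proof -
  define R where "R = rhsK Kx t0 t1 v gx gt"
  define Rw where "Rw = rhsK Kx t0 t1 (\<lambda>z. v z - q z) (\<lambda>i z. gx i z - dx i q z) (\<lambda>z. gt z - dt q z)"
  define A where "A = 1 + (1 + ctr) * cPi"
  define m where "m = max 1 cstar"
  have K: "K \<in> sets lborel" "bounded K" unfolding K_def by (rule polytopal_cylinder[OF Kx])+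
  have A: "1 \<le> A" and m: "1 \<le> m" "cstar \<le> m"
    unfolding A_def m_def using ctr cPi by simp_all
  have "Sw \<le> cstar * Rw"
    unfolding Rw_def
    by (rule S_bound, rule H1w_diff_C1[OF K v(1)]) (use q ppoly_C1 is_PiN_def in blast)
  also have "\<dots> \<le> m * Rw" using m rhsK_nonneg unfolding Rw_def by (intro mult_right_mono) simp_all
  also have "\<dots> \<le> m * (2 * A * R)"
  proof -
    have "nsq K q + (t1 - t0)^2 * nsq K (dt q) \<le> ((1 + ctr) * cPi) * (diameter Kx)^2 * R"
      using PiN_L2_bound[OF Kx t ctr cPi v[unfolded K_def] q] trace_ineq inverse_ineq
      unfolding R_def K_def by blast
    then have "Rw \<le> 2 * A * R"
      using rhsK_diff_PiN_le[OF Kx v(1)[unfolded K_def] q] unfolding Rw_def R_def A_def K_def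
      by simp
    then show ?thesis using m by (intro mult_left_mono) simp_all
  qed
  finally have Sw: "Sw \<le> 2 * (m * A * R)" by simp
  have gx: "L2 K (gx i)" for i using v(1) unfolding H1w_def by blast
  have "gradsq K q \<le> R"
    using order_trans[OF PiN_gradient_le(1)[OF K[unfolded K_def] gx[unfolded K_def] q]
        gradient_nsq_le_rhsK]
    unfolding R_def K_def .
  also have "\<dots> \<le> m * A * R"
    using A m rhsK_nonneg[of Kx t0 t1 v gx gt] mult_mono[OF m(1) A] unfolding R_def
    by (simp add: mult_le_cancel_right1)
  finally have "gradsq K q + Sw \<le> 3 * m * A * R" using Sw by simp
  then have "\<nu> * (gradsq K q + Sw) \<le> \<nu> * (3 * m * A * R)" using \<nu> by (rule mult_left_mono)
  then show ?thesis unfolding R_def A_def m_def by (simp add: algebra_simps)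
qed

theorem proposition2p11:
  fixes E :: "'e set"
    and Kx :: "'e \<Rightarrow> (real^'d::finite) set"
    and t0 t1 :: "'e \<Rightarrow> real"
    and S :: "'e \<Rightarrow> ('d pt \<Rightarrow> real) \<Rightarrow> ('d pt \<Rightarrow> real) \<Rightarrow> real"
    and \<nu> cstar ctr cPi :: real
    and p :: nat
    and v :: "'d pt \<Rightarrow> real"
    and gx :: "'e \<Rightarrow> 'd \<Rightarrow> 'd pt \<Rightarrow> real"
    and gt :: "'e \<Rightarrow> 'd pt \<Rightarrow> real"
    and tr :: "'e \<Rightarrow> real^'d \<Rightarrow> real"
    and q :: "'e \<Rightarrow> 'd pt \<Rightarrow> real"
  assumes dim: "CARD('d) \<le> 3"
    and nu_pos: "\<nu> > 0"
    and p_ge: "p \<ge> 1"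
    and fin: "finite E"
    and elem: "\<forall>e\<in>E. polytopal (Kx e) \<and> t0 e < t1 e"
    and S_sym: "\<forall>e\<in>E. \<forall>w1 w2. (\<exists>g h. H1w (Kx e \<times> {t0 e<..<t1 e}) w1 g h)
                  \<and> (\<exists>g h. H1w (Kx e \<times> {t0 e<..<t1 e}) w2 g h) \<longrightarrow> S e w1 w2 = S e w2 w1"
    and S_bilin: "\<forall>e\<in>E. \<forall>w1 w2 w3 a b. (\<exists>g h. H1w (Kx e \<times> {t0 e<..<t1 e}) w1 g h)
                  \<and> (\<exists>g h. H1w (Kx e \<times> {t0 e<..<t1 e}) w2 g h)
                  \<and> (\<exists>g h. H1w (Kx e \<times> {t0 e<..<t1 e}) w3 g h) \<longrightarrow>
                  S e (\<lambda>z. a * w1 z + b * w2 z) w3 = a * S e w1 w3 + b * S e w2 w3"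
    and S_psd: "\<forall>e\<in>E. \<forall>w. (\<exists>g h. H1w (Kx e \<times> {t0 e<..<t1 e}) w g h) \<longrightarrow> S e w w \<ge> 0"
    and S_bound: "\<forall>e\<in>E. \<forall>w gwx gwt. H1w (Kx e \<times> {t0 e<..<t1 e}) w gwx gwt \<longrightarrow>
                  S e w w \<le> cstar * rhsK (Kx e) (t0 e) (t1 e) w gwx gwt"
    and ctr_pos: "ctr > 0"
    and ctr: "\<forall>e\<in>E. \<forall>w gwx gwt trw. H1w (Kx e \<times> {t0 e<..<t1 e}) w gwx gwt
                  \<and> bottom_trace (Kx e) (t0 e) (t1 e) w gwt trw \<longrightarrow>
                  (t1 e - t0 e) * nsq (Kx e) trw
                    \<le> ctr * (nsq (Kx e \<times> {t0 e<..<t1 e}) w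
                             + (t1 e - t0 e)^2 * nsq (Kx e \<times> {t0 e<..<t1 e}) gwt)"
    and cPi_pos: "cPi > 0"
    and cPi: "\<forall>e\<in>E. \<forall>qq r. ppoly p qq \<and> is_tproj (Kx e \<times> {t0 e<..<t1 e}) p qq r \<longrightarrow>
                  nsq (Kx e \<times> {t0 e<..<t1 e}) qq
                  + (diameter (Kx e))^2 * gradsq (Kx e \<times> {t0 e<..<t1 e}) qq
                  + (t1 e - t0 e)^2 * nsq (Kx e \<times> {t0 e<..<t1 e}) (dt qq)
                \<le> cPi * ((diameter (Kx e))^2 * gradsq (Kx e \<times> {t0 e<..<t1 e}) qq
                         + nsq (Kx e \<times> {t0 e<..<t1 e}) r
                         + (t1 e - t0 e) * measure lborel (Kx e) * (mean (Kx e) (\<lambda>x. qq (x, t0 e)))^2)"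
    and v_H1: "\<forall>e\<in>E. H1w (Kx e \<times> {t0 e<..<t1 e}) v (gx e) (gt e)
                  \<and> bottom_trace (Kx e) (t0 e) (t1 e) v (gt e) (tr e)"
    and q_PiN: "\<forall>e\<in>E. is_PiN p (Kx e) (t0 e) (t1 e) v (gx e) (tr e) (q e)"
  shows "(\<forall>e\<in>E. \<nu> * gradsq (Kx e \<times> {t0 e<..<t1 e}) (q e)
                 + \<nu> * S e (\<lambda>z. v z - q e z) (\<lambda>z. v z - q e z)
               \<le> 3 * max 1 cstar * \<nu> * (1 + (1 + ctr) * cPi)
                   * rhsK (Kx e) (t0 e) (t1 e) v (gx e) (gt e))
       \<and> (\<Sum>e\<in>E. \<nu> * gradsq (Kx e \<times> {t0 e<..<t1 e}) (q e)
                 + \<nu> * S e (\<lambda>z. v z - q e z) (\<lambda>z. v z - q e z))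
           \<le> 3 * max 1 cstar * \<nu> * (1 + (1 + ctr) * cPi)
               * (\<Sum>e\<in>E. rhsK (Kx e) (t0 e) (t1 e) v (gx e) (gt e))"
proof -
  have local: "\<nu> * gradsq (Kx e \<times> {t0 e<..<t1 e}) (q e)
                 + \<nu> * S e (\<lambda>z. v z - q e z) (\<lambda>z. v z - q e z)
               \<le> 3 * max 1 cstar * \<nu> * (1 + (1 + ctr) * cPi)
                   * rhsK (Kx e) (t0 e) (t1 e) v (gx e) (gt e)" if e: "e \<in> E" for e
  proof (rule local_discrete_form_bound)
    show "polytopal (Kx e)" "t0 e \<le> t1 e" using elem e by auto
    show "0 \<le> \<nu>" "0 \<le> ctr" "0 \<le> cPi" using nu_pos ctr_pos cPi_pos by simp_all
    show "H1w (Kx e \<times> {t0 e<..<t1 e}) v (gx e) (gt e)"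
      "bottom_trace (Kx e) (t0 e) (t1 e) v (gt e) (tr e)" using v_H1 e by auto
    show "is_PiN p (Kx e) (t0 e) (t1 e) v (gx e) (tr e) (q e)" using q_PiN e by blast
  qed (use e v_H1 q_PiN ctr cPi S_bound in \<open>auto simp: is_PiN_def\<close>)
  then have "(\<Sum>e\<in>E. \<nu> * gradsq (Kx e \<times> {t0 e<..<t1 e}) (q e)
                 + \<nu> * S e (\<lambda>z. v z - q e z) (\<lambda>z. v z - q e z))
           \<le> (\<Sum>e\<in>E. 3 * max 1 cstar * \<nu> * (1 + (1 + ctr) * cPi)
               * rhsK (Kx e) (t0 e) (t1 e) v (gx e) (gt e))"
    by (rule sum_mono)
  with local show ?thesis by (simp add: sum_distrib_left)
qed

end
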